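(* Let $a,b,x\in M_d(\mathbb{C})$ be three matrices, where $b$ is Hermitian and positive definite, and suppose $bx+xb=a$. Then \[\|x\|\le\sqrt{\tfrac d2}\,\|b^{-1}\|\,\|a\|,\] where $\|\cdot\|$ denotes the Frobenius norm $\|x\|=\sqrt{\operatorname{tr}(xx^* )}$. *)

theory Defs
  imports "HOL-Analysis.Analysis"
begin

text \<open>Complex d x d matrices are rendered as complex^'n^'n, with d = CARD('n).\<close>

definition cadjoint :: "complex^'n^'m \<Rightarrow> complex^'m^'n" where
  "cadjoint A = (\<chi> i j. cnj (A $ j $ i))"

definition hermitian :: "complex^'n^'n \<Rightarrow> bool" where
  "hermitian A \<longleftrightarrow> cadjoint A = A"

definition pos_def :: "complex^'n^'n \<Rightarrow> bool" where
  "pos_def A \<longleftrightarrow> (\<forall>v::complex^'n. v \<noteq> 0 \<longrightarrow>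
      (\<Sum>i\<in>UNIV. cnj (v $ i) * (A *v v) $ i) \<in> \<real> \<and>
      Re (\<Sum>i\<in>UNIV. cnj (v $ i) * (A *v v) $ i) > 0)"

text \<open>Frobenius norm sqrt(tr(x x*)); tr(x x*) is real and nonnegative.\<close>
definition frob_norm :: "complex^'n^'n \<Rightarrow> real" where
  "frob_norm x = sqrt (Re (trace (x ** cadjoint x)))"

end

theory Submission
  imports Defs
begin

text \<open>
  The Frobenius norm is the norm of the Euclidean space of matrices, with real inner product
  \<open>Re tr(u v*)\<close>. For positive definite Hermitian \<open>b\<close>, writing \<open>z = b\<^sup>-\<^sup>1 y\<close>, the Cauchy-Schwarz
  inequality for the form \<open>\<langle>u, b v\<rangle>\<close> gives
  \<open>\<parallel>y\<parallel>\<^sup>4 = \<langle>y, b z\<rangle>\<^sup>2 \<le> \<langle>y, b y\<rangle> \<langle>z, y\<rangle> \<le> \<langle>y, b y\<rangle> \<parallel>b\<^sup>-\<^sup>1\<parallel> \<parallel>y\<parallel>\<^sup>2\<close>,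
  i.e. \<open>\<parallel>y\<parallel>\<^sup>2 \<le> \<parallel>b\<^sup>-\<^sup>1\<parallel> \<langle>y, b y\<rangle>\<close>. Applied to the columns of \<open>x\<close> this bounds \<open>\<parallel>x\<parallel>\<^sup>2\<close> by
  \<open>\<parallel>b\<^sup>-\<^sup>1\<parallel> \<langle>x, b x\<rangle>\<close>, and applied to the columns of \<open>x*\<close> by \<open>\<parallel>b\<^sup>-\<^sup>1\<parallel> \<langle>x, x b\<rangle>\<close>. Adding,
  \<open>2\<parallel>x\<parallel>\<^sup>2 \<le> \<parallel>b\<^sup>-\<^sup>1\<parallel> \<langle>x, a\<rangle> \<le> \<parallel>b\<^sup>-\<^sup>1\<parallel> \<parallel>a\<parallel> \<parallel>x\<parallel>\<close>, so in fact
  \<open>\<parallel>x\<parallel> \<le> \<parallel>b\<^sup>-\<^sup>1\<parallel> \<parallel>a\<parallel> / 2\<close>, which is stronger since \<open>1/2 \<le> sqrt (d/2)\<close>.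
\<close>

lemma inner_vec_complex:
  "inner (u::complex^'n) w = Re (\<Sum>i\<in>UNIV. cnj (u$i) * w$i)"
  by (simp add: inner_vec_def inner_complex_def)

lemma inner_columns:
  fixes A B :: "complex^'n^'m"
  shows "inner A B = (\<Sum>k\<in>UNIV. inner (column k A) (column k B))"
proof -
  have "inner A B = (\<Sum>i\<in>UNIV. \<Sum>k\<in>UNIV. inner (A$i$k) (B$i$k))"
    by (simp add: inner_vec_def)
  also have "\<dots> = (\<Sum>k\<in>UNIV. \<Sum>i\<in>UNIV. inner (A$i$k) (B$i$k))"
    by (rule sum.swap)
  finally show ?thesis by (simp add: inner_vec_def column_def)
qed

lemma column_matrix_mult: "column k (A ** B) = A *v column k B"
  by (simp add: vec_eq_iff column_def matrix_matrix_mult_def matrix_vector_mult_def)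

lemma cadjoint_matrix_mult:
  fixes A :: "complex^'n^'m" and B :: "complex^'p^'n"
  shows "cadjoint (A ** B) = cadjoint B ** cadjoint A"
  by (simp add: vec_eq_iff cadjoint_def matrix_matrix_mult_def mult.commute)

lemma inner_cadjoint:
  fixes A B :: "complex^'n^'m"
  shows "inner (cadjoint A) (cadjoint B) = inner A B"
proof -
  have "inner (cadjoint A) (cadjoint B) = (\<Sum>k\<in>UNIV. \<Sum>i\<in>UNIV. inner (A$i$k) (B$i$k))"
    by (simp add: inner_vec_def cadjoint_def inner_complex_def)
  also have "\<dots> = (\<Sum>i\<in>UNIV. \<Sum>k\<in>UNIV. inner (A$i$k) (B$i$k))"
    by (rule sum.swap)
  finally show ?thesis by (simp add: inner_vec_def)
qed

lemma norm_cadjoint: "norm (cadjoint (A::complex^'n^'m)) = norm A"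
  by (simp add: norm_eq_sqrt_inner inner_cadjoint)

lemma frob_norm_eq_norm: "frob_norm x = norm x"
proof -
  have "Re (trace (x ** cadjoint x)) = inner x x"
    by (simp add: trace_def matrix_matrix_mult_def cadjoint_def inner_vec_def inner_complex_def mult.commute)
  then show ?thesis by (simp add: frob_norm_def norm_eq_sqrt_inner)
qed

lemma inner_matrix_vector_mult_cadjoint:
  fixes A :: "complex^'n^'m"
  shows "inner u (A *v w) = inner (cadjoint A *v u) w"
proof -
  have "(\<Sum>i\<in>UNIV. cnj (u$i) * (\<Sum>j\<in>UNIV. A$i$j * w$j))
      = (\<Sum>i\<in>UNIV. \<Sum>j\<in>UNIV. cnj (u$i) * A$i$j * w$j)"
    by (simp add: sum_distrib_left mult.assoc)
  also have "\<dots> = (\<Sum>j\<in>UNIV. \<Sum>i\<in>UNIV. cnj (u$i) * A$i$j * w$j)"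
    by (rule sum.swap)
  also have "\<dots> = (\<Sum>j\<in>UNIV. cnj (\<Sum>i\<in>UNIV. cnj (A$i$j) * u$i) * w$j)"
    by (simp add: sum_distrib_left mult_ac)
  finally show ?thesis
    unfolding inner_vec_complex matrix_vector_mult_def cadjoint_def vec_lambda_beta
    by (rule arg_cong[where f = Re])
qed

lemma hermitian_inner_matrix_vector_mult:
  "hermitian b \<Longrightarrow> inner u (b *v w) = inner (b *v u) w"
  by (simp add: inner_matrix_vector_mult_cadjoint hermitian_def)

lemma pos_def_inner_pos:
  "pos_def b \<Longrightarrow> v \<noteq> 0 \<Longrightarrow> 0 < inner v (b *v v)"
  unfolding pos_def_def inner_vec_complex by blast

lemma pos_def_inner_nonneg:
  "pos_def b \<Longrightarrow> 0 \<le> inner v (b *v v)"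
  by (cases "v = 0") (auto dest: pos_def_inner_pos[of b v])

lemma pos_def_matrix_inv_right:
  assumes "pos_def b"
  shows "b ** matrix_inv b = mat 1"
proof -
  have "\<forall>v. b *v v = 0 \<longrightarrow> v = 0"
    using pos_def_inner_pos[OF assms] by (metis inner_zero_right less_irrefl)
  then have "invertible b"
    using matrix_left_invertible_ker invertible_left_inverse by blast
  then show ?thesis
    unfolding invertible_def matrix_inv_def by (metis (mono_tags, lifting) someI_ex)
qed

lemma matrix_vector_mult_scaleR_gen:
  fixes A :: "'a::real_algebra_1^'n^'m"
  shows "A *v (c *\<^sub>R x) = c *\<^sub>R (A *v x)"
  by (simp add: vec_eq_iff matrix_vector_mult_def scaleR_sum_right)

lemma pos_def_cauchy_schwarz:
  assumes "hermitian b" and "pos_def b"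
  shows "(inner u (b *v w))^2 \<le> inner u (b *v u) * inner w (b *v w)"
proof (cases "w = 0")
  case True then show ?thesis by simp
next
  case False
  define A B C where "A = inner u (b *v u)" and "B = inner u (b *v w)" and "C = inner w (b *v w)"
  have "C > 0" using pos_def_inner_pos[OF assms(2) False] by (simp add: C_def)
  have "inner w (b *v u) = B"
    unfolding B_def by (metis hermitian_inner_matrix_vector_mult[OF assms(1)] inner_commute)
  then have "inner (u - (B / C) *\<^sub>R w) (b *v (u - (B / C) *\<^sub>R w)) = A - B^2 / C"
    using \<open>C > 0\<close> unfolding A_def B_def C_def
    by (simp add: matrix_vector_mult_diff_distrib matrix_vector_mult_scaleR_gen inner_diff_left
        inner_diff_right field_simps power2_eq_square)
  then have "B^2 / C \<le> A"
    using pos_def_inner_nonneg[OF assms(2)] by (metis diff_ge_0_iff_ge)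
  with \<open>C > 0\<close> show ?thesis by (simp add: A_def B_def C_def divide_le_eq)
qed

lemma norm_matrix_vector_mult_le:
  fixes M :: "complex^'n^'m"
  shows "norm (M *v y) \<le> norm M * norm y"
proof -
  have row: "cmod ((M *v y)$i) \<le> norm (M$i) * norm y" for i
  proof -
    have "cmod ((M *v y)$i) \<le> (\<Sum>j\<in>UNIV. \<bar>cmod (M$i$j)\<bar> * \<bar>cmod (y$j)\<bar>)"
      unfolding matrix_vector_mult_def by (simp add: norm_mult[symmetric] norm_sum)
    also have "\<dots> \<le> norm (M$i) * norm y"
      unfolding norm_vec_def by (rule L2_set_mult_ineq)
    finally show ?thesis .
  qed
  have "norm (M *v y) \<le> L2_set (\<lambda>i. norm (M$i) * norm y) UNIV"
    unfolding norm_vec_def[of "M *v y"] by (rule L2_set_mono) (auto simp: row)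
  also have "\<dots> = norm M * norm y"
    by (simp add: norm_vec_def L2_set_left_distrib)
  finally show ?thesis .
qed

lemma pos_def_norm_sq_le:
  assumes "hermitian b" and "pos_def b"
  shows "(norm y)^2 \<le> norm (matrix_inv b) * inner y (b *v y)"
proof (cases "y = 0")
  case True then show ?thesis by simp
next
  case False
  define z where "z = matrix_inv b *v y"
  have "b *v z = y"
    by (simp add: z_def matrix_vector_mul_assoc pos_def_matrix_inv_right[OF assms(2)])
  have "inner z (b *v z) \<le> norm (matrix_inv b) * (norm y)^2"
  proof -
    have "inner z (b *v z) \<le> norm z * norm y"
      using \<open>b *v z = y\<close> norm_cauchy_schwarz by metis
    also have "\<dots> \<le> norm (matrix_inv b) * norm y * norm y"
      unfolding z_def by (intro mult_right_mono norm_matrix_vector_mult_le) simp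
    finally show ?thesis by (simp add: power2_eq_square mult.assoc)
  qed
  then have "((norm y)^2)^2 \<le> inner y (b *v y) * (norm (matrix_inv b) * (norm y)^2)"
    using pos_def_cauchy_schwarz[OF assms, of y z] pos_def_inner_nonneg[OF assms(2), of y]
    by (metis \<open>b *v z = y\<close> power2_norm_eq_inner mult_left_mono order.trans)
  then have "(norm y)^2 * (norm y)^2 \<le> (norm (matrix_inv b) * inner y (b *v y)) * (norm y)^2"
    by (simp only: power2_eq_square[of "(norm y)^2"] mult_ac)
  moreover have "0 < (norm y)^2"
    using False by simp
  ultimately show ?thesis
    by (rule mult_right_le_imp_le)
qed

lemma pos_def_norm_sq_le_matrix:
  fixes b x :: "complex^'n^'n"
  assumes "hermitian b" and "pos_def b"
  shows "(norm x)^2 \<le> norm (matrix_inv b) * inner x (b ** x)"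
proof -
  have "(norm x)^2 = (\<Sum>k\<in>UNIV. (norm (column k x))^2)"
    by (simp add: power2_norm_eq_inner inner_columns[of x x])
  also have "\<dots> \<le> (\<Sum>k\<in>UNIV. norm (matrix_inv b) * inner (column k x) (b *v column k x))"
    by (intro sum_mono pos_def_norm_sq_le assms)
  also have "\<dots> = norm (matrix_inv b) * inner x (b ** x)"
    by (simp add: inner_columns[of x] column_matrix_mult sum_distrib_left)
  finally show ?thesis .
qed

lemma norm_le_anticommutator:
  fixes b x :: "complex^'n^'n"
  assumes "hermitian b" and "pos_def b"
  shows "2 * norm x \<le> norm (matrix_inv b) * norm (b ** x + x ** b)"
proof -
  have "cadjoint (x ** b) = b ** cadjoint x"
    using \<open>hermitian b\<close> by (simp add: cadjoint_matrix_mult hermitian_def)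
  then have "inner x (x ** b) = inner (cadjoint x) (b ** cadjoint x)"
    by (metis inner_cadjoint)
  then have "(norm x)^2 \<le> norm (matrix_inv b) * inner x (x ** b)"
    using pos_def_norm_sq_le_matrix[OF assms, of "cadjoint x"] by (simp add: norm_cadjoint)
  then have "2 * (norm x)^2 \<le> norm (matrix_inv b) * inner x (b ** x + x ** b)"
    using pos_def_norm_sq_le_matrix[OF assms, of x] by (simp add: inner_add_right distrib_left)
  also have "\<dots> \<le> norm (matrix_inv b) * (norm x * norm (b ** x + x ** b))"
    by (intro mult_left_mono norm_cauchy_schwarz) simp
  finally show ?thesis
    by (cases "x = 0") (simp_all add: power2_eq_square mult_ac mult_le_cancel_left_pos)
qed

theorem lemma4p9:
  fixes a b x :: "complex^'n^'n"
  assumes "hermitian b" and "pos_def b"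
    and "b ** x + x ** b = a"
  shows "frob_norm x \<le> sqrt (real CARD('n) / 2) * frob_norm (matrix_inv b) * frob_norm a"
proof -
  have "1 \<le> real CARD('n)"
    using finite_UNIV_card_ge_0[where 'a = 'n] by simp
  then have "(1 / 2)^2 \<le> real CARD('n) / 2"
    unfolding power2_eq_square by linarith
  then have "1 / 2 \<le> sqrt (real CARD('n) / 2)"
    by (rule real_le_rsqrt)
  then have "1 / 2 * (norm (matrix_inv b) * norm a)
      \<le> sqrt (real CARD('n) / 2) * (norm (matrix_inv b) * norm a)"
    by (intro mult_right_mono) simp_all
  with norm_le_anticommutator[OF assms(1,2), of x] show ?thesis
    by (simp add: frob_norm_eq_norm assms(3) mult.assoc)
qed

end
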